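(* Let $R$ be a Hilbert ring, i.e. a ring in which every prime ideal is an intersection of maximal ideals. Then $R$ is feckly clean if and only if $\operatorname{Max}(R)$ is strongly zero-dimensional.
   Context: Rings are associative with identity, not necessarily commutative; ideals are two-sided; $J(R)$ is the Jacobson radical. An element $u\in R$ is full if $RuR=R$. An element $a\in R$ is feckly clean if there exist $e\in R$ and a full element $u\in R$ with $a=e+u$ and $eR(1-e)\subseteq J(R)$; $R$ is feckly clean if every element is feckly clean. $\operatorname{Max}(R)$ is the set of all maximal ideals of $R$, topologized so that the closed sets are exactly the sets $V(I)=\{P\in\operatorname{Max}(R): I\subseteq P\}$ for ideals $I$. A topological space $X$ is strongly zero-dimensional if for any two disjoint closed sets $A,B\subseteq X$ there exist disjoint clopen sets $C_1,C_2$ with $A\subseteq C_1$ and $B\subseteq C_2$. *)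

theory Defs
  imports "HOL-Analysis.Analysis"
begin

definition two_sided_ideal :: "'a::ring_1 set \<Rightarrow> bool" where
  "two_sided_ideal I \<longleftrightarrow> 0 \<in> I \<and> (\<forall>a\<in>I. \<forall>b\<in>I. a + b \<in> I) \<and> (\<forall>a\<in>I. - a \<in> I)
     \<and> (\<forall>r a. a \<in> I \<longrightarrow> r * a \<in> I \<and> a * r \<in> I)"

definition left_ideal :: "'a::ring_1 set \<Rightarrow> bool" where
  "left_ideal I \<longleftrightarrow> 0 \<in> I \<and> (\<forall>a\<in>I. \<forall>b\<in>I. a + b \<in> I) \<and> (\<forall>a\<in>I. - a \<in> I)
     \<and> (\<forall>r a. a \<in> I \<longrightarrow> r * a \<in> I)"

definition maximal_ideal :: "'a::ring_1 set \<Rightarrow> bool" where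
  "maximal_ideal M \<longleftrightarrow> two_sided_ideal M \<and> M \<noteq> UNIV \<and>
     (\<forall>I. two_sided_ideal I \<and> M \<subseteq> I \<longrightarrow> I = M \<or> I = UNIV)"

definition maximal_left_ideal :: "'a::ring_1 set \<Rightarrow> bool" where
  "maximal_left_ideal M \<longleftrightarrow> left_ideal M \<and> M \<noteq> UNIV \<and>
     (\<forall>I. left_ideal I \<and> M \<subseteq> I \<longrightarrow> I = M \<or> I = UNIV)"

definition prime_ideal :: "'a::ring_1 set \<Rightarrow> bool" where
  "prime_ideal P \<longleftrightarrow> two_sided_ideal P \<and> P \<noteq> UNIV \<and>
     (\<forall>A B. two_sided_ideal A \<and> two_sided_ideal B \<and> (\<forall>a\<in>A. \<forall>b\<in>B. a * b \<in> P)
        \<longrightarrow> A \<subseteq> P \<or> B \<subseteq> P)"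

definition jacobson :: "'a::ring_1 set" where
  "jacobson = \<Inter>{M. maximal_left_ideal M}"

text \<open>Two-sided ideal generated by a set (so R u R is ideal_gen {u}).\<close>
definition ideal_gen :: "'a::ring_1 set \<Rightarrow> 'a set" where
  "ideal_gen S = \<Inter>{I. two_sided_ideal I \<and> S \<subseteq> I}"

definition full :: "'a::ring_1 \<Rightarrow> bool" where
  "full u \<longleftrightarrow> ideal_gen {u} = UNIV"

definition feckly_clean_elem :: "'a::ring_1 \<Rightarrow> bool" where
  "feckly_clean_elem a \<longleftrightarrow> (\<exists>e u. a = e + u \<and> full u \<and> (\<forall>r. e * r * (1 - e) \<in> jacobson))"

definition feckly_clean :: "'a::ring_1 itself \<Rightarrow> bool" where
  "feckly_clean _ \<longleftrightarrow> (\<forall>a::'a. feckly_clean_elem a)"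

definition hilbert_ring :: "'a::ring_1 itself \<Rightarrow> bool" where
  "hilbert_ring _ \<longleftrightarrow> (\<forall>P::'a set. prime_ideal P \<longrightarrow>
      (\<exists>\<M>. (\<forall>M\<in>\<M>. maximal_ideal M) \<and> P = \<Inter>\<M>))"

definition MaxSpec :: "'a::ring_1 set set" where
  "MaxSpec = {M. maximal_ideal M}"

definition V :: "'a::ring_1 set \<Rightarrow> 'a set set" where
  "V I = {P \<in> MaxSpec. I \<subseteq> P}"

definition max_topology :: "'a::ring_1 itself \<Rightarrow> 'a set topology" where
  "max_topology _ = topology (\<lambda>U. \<exists>I. two_sided_ideal I \<and> U = MaxSpec - V I)"

definition strongly_zero_dimensional :: "'b topology \<Rightarrow> bool" where
  "strongly_zero_dimensional X \<longleftrightarrow>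
     (\<forall>A B. closedin X A \<and> closedin X B \<and> A \<inter> B = {} \<longrightarrow>
        (\<exists>C1 C2. closedin X C1 \<and> openin X C1 \<and> closedin X C2 \<and> openin X C2 \<and>
                 C1 \<inter> C2 = {} \<and> A \<subseteq> C1 \<and> B \<subseteq> C2))"

end

theory Submission
  imports Defs
begin

(*
  Call e Max-splitting (splits_max) if every maximal ideal contains e or 1 - e
  (never both).  For such e the set ZMax e of maximal ideals containing e is
  clopen; conversely, a clopen C = V(I) = Max(R) - V(K) comes from comaximal
  ideals, and k in a decomposition 1 = i + k (i in I, k in K) splits Max(R) with
  C = ZMax (1 - k).  Hence, in any ring, Max(R) is strongly zero-dimensional iff
  every a is max_clean: a = e + u with e Max-splitting and u full (i.e. u lies
  in no maximal ideal).

  It remains to show that, in a Hilbert ring, e R (1 - e) \<subseteq> J(R) holds exactly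
  for the Max-splitting e.  One direction holds always, since J(R) lies in every
  maximal ideal and maximal ideals are prime.  For the other, J(R) equals the
  intersection of the maximal ideals: the core {y. y R \<subseteq> L} of a maximal left
  ideal L is a prime ideal, hence an intersection of maximal ideals.
*)

subsection \<open>Ideals\<close>

lemma left_idealI:
  assumes "0 \<in> I" "\<And>a b. a \<in> I \<Longrightarrow> b \<in> I \<Longrightarrow> a + b \<in> I" "\<And>a. a \<in> I \<Longrightarrow> - a \<in> I"
    "\<And>a r. a \<in> I \<Longrightarrow> r * a \<in> I"
  shows "left_ideal (I::'a::ring_1 set)"
  using assms unfolding left_ideal_def by auto

lemma left_idealD:
  assumes "left_ideal I"
  shows "0 \<in> I" "a \<in> I \<Longrightarrow> b \<in> I \<Longrightarrow> a + b \<in> I" "a \<in> I \<Longrightarrow> - a \<in> I"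
    "a \<in> I \<Longrightarrow> r * a \<in> I"
  using assms unfolding left_ideal_def by auto

lemma two_sided_iff_left:
  "two_sided_ideal I \<longleftrightarrow> left_ideal I \<and> (\<forall>a r. a \<in> I \<longrightarrow> a * r \<in> I)"
  unfolding two_sided_ideal_def left_ideal_def by blast

lemma two_sided_idealD:
  assumes "two_sided_ideal I"
  shows "0 \<in> I" "a \<in> I \<Longrightarrow> b \<in> I \<Longrightarrow> a + b \<in> I" "a \<in> I \<Longrightarrow> b \<in> I \<Longrightarrow> a - b \<in> I"
    "a \<in> I \<Longrightarrow> r * a \<in> I" "a \<in> I \<Longrightarrow> a * r \<in> I" "a \<in> I \<Longrightarrow> - a \<in> I"
  using assms unfolding two_sided_ideal_def by (auto simp del: add_uminus_conv_diff simp add: diff_conv_add_uminus)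

lemma two_sided_idealI:
  assumes "0 \<in> I" "\<And>a b. a \<in> I \<Longrightarrow> b \<in> I \<Longrightarrow> a + b \<in> I" "\<And>a. a \<in> I \<Longrightarrow> - a \<in> I"
    "\<And>a r. a \<in> I \<Longrightarrow> r * a \<in> I" "\<And>a r. a \<in> I \<Longrightarrow> a * r \<in> I"
  shows "two_sided_ideal (I::'a::ring_1 set)"
  using assms unfolding two_sided_ideal_def by auto

lemma left_ideal_one: "left_ideal (I::'a::ring_1 set) \<Longrightarrow> 1 \<in> I \<Longrightarrow> I = UNIV"
  by (metis UNIV_eq_I left_idealD(4) mult.right_neutral)

lemma two_sided_ideal_one: "two_sided_ideal (I::'a::ring_1 set) \<Longrightarrow> 1 \<in> I \<Longrightarrow> I = UNIV"
  using left_ideal_one two_sided_iff_left by blast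

lemma maximal_ideal_two_sided: "maximal_ideal M \<Longrightarrow> two_sided_ideal M"
  by (simp add: maximal_ideal_def)

lemma maximal_left_ideal_left: "maximal_left_ideal L \<Longrightarrow> left_ideal L"
  by (simp add: maximal_left_ideal_def)

lemma maximal_ideal_not_both:
  assumes "maximal_ideal (M::'a::ring_1 set)" "x \<in> M" "1 - x \<in> M"
  shows False
proof -
  have "x + (1 - x) \<in> M"
    using assms two_sided_idealD(2) maximal_ideal_two_sided by blast
  then show False
    using assms(1) two_sided_ideal_one[OF maximal_ideal_two_sided] unfolding maximal_ideal_def by auto
qed

lemma two_sided_ideal_gen: "two_sided_ideal (ideal_gen (S::'a::ring_1 set))"
  unfolding ideal_gen_def two_sided_ideal_def by blast

lemma ideal_gen_subset_iff: "two_sided_ideal (I::'a::ring_1 set) \<Longrightarrow> ideal_gen S \<subseteq> I \<longleftrightarrow> S \<subseteq> I"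
  unfolding ideal_gen_def by blast

lemma two_sided_ideal_Int:
  assumes I: "two_sided_ideal I" and K: "two_sided_ideal (K::'a::ring_1 set)"
  shows "two_sided_ideal (I \<inter> K)"
  by (rule two_sided_idealI) (simp_all add: two_sided_idealD[OF I] two_sided_idealD[OF K])

lemma left_ideal_sum:
  assumes I: "left_ideal I" and K: "left_ideal (K::'a::ring_1 set)"
  shows "left_ideal {a + b |a b. a \<in> I \<and> b \<in> K}"
proof (rule left_idealI)
  have "(0::'a) = 0 + 0" "0 \<in> I" "0 \<in> K" using left_idealD(1)[OF I] left_idealD(1)[OF K] by simp_all
  then show "0 \<in> {a + b |a b. a \<in> I \<and> b \<in> K}" by blast
next
  fix x y assume "x \<in> {a + b |a b. a \<in> I \<and> b \<in> K}" "y \<in> {a + b |a b. a \<in> I \<and> b \<in> K}"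
  then obtain a b c d where "x = a + b" "y = c + d" "a \<in> I" "b \<in> K" "c \<in> I" "d \<in> K" by blast
  then have "x + y = (a + c) + (b + d)" "a + c \<in> I" "b + d \<in> K"
    using left_idealD(2)[OF I] left_idealD(2)[OF K] by (auto simp: algebra_simps)
  then show "x + y \<in> {a + b |a b. a \<in> I \<and> b \<in> K}" by blast
next
  fix x assume "x \<in> {a + b |a b. a \<in> I \<and> b \<in> K}"
  then obtain a b where "x = a + b" "a \<in> I" "b \<in> K" by blast
  then have "- x = (- a) + (- b)" "- a \<in> I" "- b \<in> K"
    using left_idealD(3)[OF I] left_idealD(3)[OF K] by auto
  then show "- x \<in> {a + b |a b. a \<in> I \<and> b \<in> K}" by blast
next
  fix x r assume "x \<in> {a + b |a b. a \<in> I \<and> b \<in> K}"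
  then obtain a b where "x = a + b" "a \<in> I" "b \<in> K" by blast
  then have "r * x = r * a + r * b" "r * a \<in> I" "r * b \<in> K"
    using left_idealD(4)[OF I] left_idealD(4)[OF K] by (auto simp: distrib_left)
  then show "r * x \<in> {a + b |a b. a \<in> I \<and> b \<in> K}" by blast
qed

lemma two_sided_ideal_sum:
  assumes "two_sided_ideal I" "two_sided_ideal (K::'a::ring_1 set)"
  shows "two_sided_ideal {a + b |a b. a \<in> I \<and> b \<in> K}"
  unfolding two_sided_iff_left
proof (intro conjI allI impI)
  show "left_ideal {a + b |a b. a \<in> I \<and> b \<in> K}"
    using assms left_ideal_sum two_sided_iff_left by blast
  fix x r assume "x \<in> {a + b |a b. a \<in> I \<and> b \<in> K}"
  then obtain a b where "x = a + b" "a \<in> I" "b \<in> K" by blast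
  then have "x * r = a * r + b * r" "a * r \<in> I" "b * r \<in> K"
    using two_sided_idealD(5)[OF assms(1)] two_sided_idealD(5)[OF assms(2)] by (auto simp: distrib_right)
  then show "x * r \<in> {a + b |a b. a \<in> I \<and> b \<in> K}" by blast
qed

lemma left_ideal_principal: "left_ideal {t * y |t. True}"
proof (rule left_idealI)
  have "0 = 0 * y" by simp
  then show "0 \<in> {t * y |t. True}" by blast
next
  fix a b assume "a \<in> {t * y |t. True}" "b \<in> {t * y |t. True}"
  then obtain s t where "a = s * y" "b = t * y" by blast
  then have "a + b = (s + t) * y" by (simp add: distrib_right)
  then show "a + b \<in> {t * y |t. True}" by blast
next
  fix a assume "a \<in> {t * y |t. True}"
  then obtain t where "a = t * y" by blast
  then have "- a = (- t) * y" by simp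
  then show "- a \<in> {t * y |t. True}" by blast
next
  fix a r assume "a \<in> {t * y |t. True}"
  then obtain t where "a = t * y" by blast
  then have "r * a = (r * t) * y" by (simp add: mult.assoc)
  then show "r * a \<in> {t * y |t. True}" by blast
qed

lemma left_ideal_chain_Union:
  assumes C: "C \<noteq> {}" "\<forall>X\<in>C. left_ideal X" and chain: "\<forall>X\<in>C. \<forall>Y\<in>C. X \<subseteq> Y \<or> Y \<subseteq> X"
  shows "left_ideal (\<Union>C :: 'a::ring_1 set)"
proof (rule left_idealI)
  fix a b assume "a \<in> \<Union>C" "b \<in> \<Union>C"
  then obtain X Y where "X \<in> C" "Y \<in> C" "a \<in> X" "b \<in> Y" by blast
  then obtain Z where "Z \<in> C" "a \<in> Z" "b \<in> Z" using chain by blast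
  then show "a + b \<in> \<Union>C" using C(2) left_idealD(2) by blast
next
  show "0 \<in> \<Union>C" using C left_idealD(1) by blast
next
  fix a assume "a \<in> \<Union>C"
  then obtain X where "X \<in> C" "a \<in> X" by blast
  then show "- a \<in> \<Union>C" using C(2) left_idealD(3) by blast
next
  fix a r assume "a \<in> \<Union>C"
  then obtain X where "X \<in> C" "a \<in> X" by blast
  then show "r * a \<in> \<Union>C" using C(2) left_idealD(4) by blast
qed

lemma Zorn_proper_ideal:
  fixes P :: "'a::ring_1 set \<Rightarrow> bool"
  assumes chain_closed: "\<And>C. C \<noteq> {} \<Longrightarrow> \<forall>X\<in>C. P X \<Longrightarrow> \<forall>X\<in>C. \<forall>Y\<in>C. X \<subseteq> Y \<or> Y \<subseteq> X \<Longrightarrow> P (\<Union>C)"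
    and unit: "\<And>J. P J \<Longrightarrow> 1 \<in> J \<Longrightarrow> J = UNIV"
    and I: "P I" "1 \<notin> I"
  shows "\<exists>M. P M \<and> I \<subseteq> M \<and> M \<noteq> UNIV \<and> (\<forall>J. P J \<and> M \<subseteq> J \<longrightarrow> J = M \<or> J = UNIV)"
proof -
  let ?F = "{J. P J \<and> I \<subseteq> J \<and> 1 \<notin> J}"
  have "\<exists>M\<in>?F. \<forall>X\<in>?F. M \<subseteq> X \<longrightarrow> X = M"
  proof (rule subset_Zorn_nonempty)
    fix C assume "C \<noteq> {}" "subset.chain ?F C"
    then show "\<Union>C \<in> ?F" using chain_closed[of C] by (auto simp: subset_chain_def)
  qed (use I in blast)
  then obtain M where M: "M \<in> ?F" and max: "\<forall>X\<in>?F. M \<subseteq> X \<longrightarrow> X = M" by blast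
  have "J = M \<or> J = UNIV" if J: "P J" "M \<subseteq> J" for J
  proof (cases "1 \<in> J")
    case False
    then have "J \<in> ?F" using J M by auto
    then show ?thesis using J max by blast
  qed (use J unit in blast)
  then show ?thesis using M by blast
qed

lemma exists_maximal_ideal:
  assumes "two_sided_ideal (I::'a::ring_1 set)" "1 \<notin> I"
  shows "\<exists>M. maximal_ideal M \<and> I \<subseteq> M"
proof -
  have "two_sided_ideal (\<Union>C)"
    if "C \<noteq> {}" "\<forall>X\<in>C. two_sided_ideal X" "\<forall>X\<in>C. \<forall>Y\<in>C. X \<subseteq> Y \<or> Y \<subseteq> X" for C :: "'a set set"
    using that left_ideal_chain_Union[OF that(1)] unfolding two_sided_iff_left by blast
  from Zorn_proper_ideal[OF this two_sided_ideal_one assms] show ?thesis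
    unfolding maximal_ideal_def by blast
qed

lemma exists_maximal_left_ideal:
  assumes "left_ideal (I::'a::ring_1 set)" "1 \<notin> I"
  shows "\<exists>L. maximal_left_ideal L \<and> I \<subseteq> L"
  using Zorn_proper_ideal[OF left_ideal_chain_Union left_ideal_one assms]
  unfolding maximal_left_ideal_def by blast

subsection \<open>Cores of left ideals\<close>

lemma left_ideal_quotient:
  assumes L: "left_ideal L"
  shows "left_ideal {y. y * s \<in> L}"
proof (rule left_idealI)
  show "0 \<in> {y. y * s \<in> L}" using left_idealD(1)[OF L] by simp
next
  fix x y assume "x \<in> {y. y * s \<in> L}" "y \<in> {y. y * s \<in> L}"
  then show "x + y \<in> {y. y * s \<in> L}" using left_idealD(2)[OF L] by (simp add: distrib_right)
next
  fix x assume "x \<in> {y. y * s \<in> L}"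
  then show "- x \<in> {y. y * s \<in> L}" using left_idealD(3)[OF L] by simp
next
  fix x r assume "x \<in> {y. y * s \<in> L}"
  then show "r * x \<in> {y. y * s \<in> L}" using left_idealD(4)[OF L] by (simp add: mult.assoc)
qed

text \<open>The core of L: for a left ideal L, the largest two-sided ideal contained in L.\<close>
definition core :: "'a::ring_1 set \<Rightarrow> 'a set" where
  "core L = {y. \<forall>s. y * s \<in> L}"

lemma core_two_sided:
  assumes L: "left_ideal L"
  shows "two_sided_ideal (core L)"
proof (rule two_sided_idealI)
  show "0 \<in> core L" using left_idealD(1)[OF L] unfolding core_def by simp
next
  fix x y assume "x \<in> core L" "y \<in> core L"
  then show "x + y \<in> core L" using left_idealD(2)[OF L] unfolding core_def by (simp add: distrib_right)
next
  fix x assume "x \<in> core L"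
  then show "- x \<in> core L" using left_idealD(3)[OF L] unfolding core_def by simp
next
  fix x r assume "x \<in> core L"
  then show "r * x \<in> core L" using left_idealD(4)[OF L] unfolding core_def by (simp add: mult.assoc)
next
  fix x r assume x: "x \<in> core L"
  show "x * r \<in> core L" unfolding core_def
  proof (intro CollectI allI)
    fix s have "x * (r * s) \<in> L" using x unfolding core_def by blast
    then show "x * r * s \<in> L" by (simp add: mult.assoc)
  qed
qed

lemma core_subset: "core L \<subseteq> L"
proof
  fix y assume "y \<in> core L"
  then have "y * 1 \<in> L" unfolding core_def by blast
  then show "y \<in> L" by simp
qed

lemma two_sided_ideal_subset_core:
  assumes "two_sided_ideal I" "I \<subseteq> L"
  shows "I \<subseteq> core L"
  unfolding core_def using two_sided_idealD(5)[OF assms(1)] assms(2) by blast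

text \<open>The elements x with x R b \<subseteq> M form the core of the left ideal {y. y b \<in> M}, a two-sided
  ideal containing M and a, hence everything.\<close>
lemma maximal_ideal_prime:
  fixes M :: "'a::ring_1 set"
  assumes M: "maximal_ideal M" and a: "a \<notin> M" and b: "\<forall>r. a * r * b \<in> M"
  shows "b \<in> M"
proof -
  let ?A = "core {y. y * b \<in> M}"
  have tM: "two_sided_ideal M" using M by (rule maximal_ideal_two_sided)
  then have "two_sided_ideal ?A"
    using core_two_sided left_ideal_quotient two_sided_iff_left by blast
  moreover have "M \<subseteq> ?A" using two_sided_idealD(5)[OF tM] unfolding core_def by auto
  moreover have "a \<in> ?A" using b unfolding core_def by simp
  ultimately have "?A = UNIV" using M a unfolding maximal_ideal_def by blast
  then have "1 * 1 * b \<in> M" unfolding core_def by blast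
  then show ?thesis by simp
qed

subsection \<open>Maximal left ideals and the Jacobson radical\<close>

lemma maximal_left_ideal_plus:
  fixes L :: "'a::ring_1 set"
  assumes L: "maximal_left_ideal L" and y: "y \<notin> L"
  shows "\<exists>l t. l \<in> L \<and> z = l + t * y"
proof -
  let ?Ry = "{t * y |t. True}"
  have lL: "left_ideal L" using L by (rule maximal_left_ideal_left)
  have "left_ideal {a + b |a b. a \<in> L \<and> b \<in> ?Ry}"
    using lL left_ideal_principal left_ideal_sum by blast
  moreover have "L \<subseteq> {a + b |a b. a \<in> L \<and> b \<in> ?Ry}"
  proof
    fix l assume "l \<in> L"
    moreover have "l = l + 0 * y" by simp
    ultimately show "l \<in> {a + b |a b. a \<in> L \<and> b \<in> ?Ry}" by blast
  qed
  moreover have "y \<in> {a + b |a b. a \<in> L \<and> b \<in> ?Ry}"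
  proof -
    have "y = 0 + 1 * y" by simp
    then show ?thesis using left_idealD(1)[OF lL] by blast
  qed
  ultimately have "{a + b |a b. a \<in> L \<and> b \<in> ?Ry} = UNIV"
    using L y unfolding maximal_left_ideal_def by blast
  then show ?thesis by blast
qed

lemma maximal_left_ideal_quotient:
  fixes L :: "'a::ring_1 set"
  assumes L: "maximal_left_ideal L" and s: "s \<notin> L"
  shows "maximal_left_ideal {y. y * s \<in> L}"
  unfolding maximal_left_ideal_def
proof (intro conjI allI impI)
  have lL: "left_ideal L" using L by (rule maximal_left_ideal_left)
  show "left_ideal {y. y * s \<in> L}" using lL by (rule left_ideal_quotient)
  show "{y. y * s \<in> L} \<noteq> UNIV"
  proof
    assume "{y. y * s \<in> L} = UNIV"
    then have "1 * s \<in> L" by blast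
    then show False using s by simp
  qed
  fix I assume I: "left_ideal I \<and> {y. y * s \<in> L} \<subseteq> I"
  show "I = {y. y * s \<in> L} \<or> I = UNIV"
  proof (cases "I \<subseteq> {y. y * s \<in> L}")
    case False
    then obtain y where y: "y \<in> I" "y * s \<notin> L" by blast
    have "z \<in> I" for z
    proof -
      obtain l t where lt: "l \<in> L" "z * s = l + t * (y * s)"
        using maximal_left_ideal_plus[OF L y(2)] by blast
      have "(z - t * y) * s = l" using lt(2) by (simp add: algebra_simps)
      then have "z - t * y \<in> I" using lt(1) I by auto
      moreover have "t * y \<in> I" using y(1) I left_idealD(4) by blast
      ultimately have "(z - t * y) + t * y \<in> I" using I left_idealD(2) by blast
      then show ?thesis by simp
    qed
    then show ?thesis by blast
  qed (use I in blast)
qed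

lemma jacobson_subset_core:
  assumes L: "maximal_left_ideal L"
  shows "jacobson \<subseteq> core L"
proof
  fix x :: 'a assume x: "x \<in> jacobson"
  have "x * s \<in> L" for s
  proof (cases "s \<in> L")
    case True
    then show ?thesis using left_idealD(4)[OF maximal_left_ideal_left[OF L]] by blast
  next
    case False
    then have "maximal_left_ideal {y. y * s \<in> L}" using maximal_left_ideal_quotient L by blast
    then show ?thesis using x unfolding jacobson_def by blast
  qed
  then show "x \<in> core L" unfolding core_def by blast
qed

lemma core_prime:
  fixes L :: "'a::ring_1 set"
  assumes L: "maximal_left_ideal L"
  shows "prime_ideal (core L)"
  unfolding prime_ideal_def
proof (intro conjI allI impI)
  have lL: "left_ideal L" using L by (rule maximal_left_ideal_left)
  show "two_sided_ideal (core L)" using lL by (rule core_two_sided)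
  show "core L \<noteq> UNIV" using core_subset L unfolding maximal_left_ideal_def by blast
  fix A B assume AB: "two_sided_ideal A \<and> two_sided_ideal B \<and> (\<forall>a\<in>A. \<forall>b\<in>B. a * b \<in> core L)"
  show "A \<subseteq> core L \<or> B \<subseteq> core L"
  proof (cases "B \<subseteq> core L")
    case False
    then obtain b r where b: "b \<in> B" "b * r \<notin> L" unfolding core_def by blast
    have "a * s \<in> L" if a: "a \<in> A" for a s
    proof -
      obtain l t where lt: "l \<in> L" "s = l + t * (b * r)"
        using maximal_left_ideal_plus[OF L b(2)] by blast
      have "a * s = a * l + (a * t * b) * r" using lt(2) by (simp add: algebra_simps)
      moreover have "a * l \<in> L" using lt(1) left_idealD(4)[OF lL] by blast
      moreover have "(a * t) * b \<in> core L" using a AB b(1) two_sided_idealD(5) by blast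
      then have "(a * t * b) * r \<in> L" unfolding core_def by blast
      ultimately show "a * s \<in> L" using left_idealD(2)[OF lL] by metis
    qed
    then show ?thesis unfolding core_def by blast
  qed simp
qed

text \<open>Every maximal ideal is the core of a maximal left ideal; hence J(R) \<subseteq> M.\<close>
lemma jacobson_subset_maximal_ideal:
  fixes M :: "'a::ring_1 set"
  assumes M: "maximal_ideal M"
  shows "jacobson \<subseteq> M"
proof -
  have tM: "two_sided_ideal M" using M by (rule maximal_ideal_two_sided)
  then have "left_ideal M" "1 \<notin> M"
    using M two_sided_iff_left two_sided_ideal_one unfolding maximal_ideal_def by auto
  then obtain L where L: "maximal_left_ideal L" "M \<subseteq> L"
    using exists_maximal_left_ideal by blast
  have "M \<subseteq> core L" using two_sided_ideal_subset_core[OF tM L(2)] .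
  moreover have "core L \<noteq> UNIV" using core_subset L(1) unfolding maximal_left_ideal_def by blast
  ultimately have "core L = M"
    using M core_two_sided[OF maximal_left_ideal_left[OF L(1)]] unfolding maximal_ideal_def by blast
  then show ?thesis using jacobson_subset_core[OF L(1)] by simp
qed

lemma hilbert_jacobson_iff:
  fixes x :: "'a::ring_1"
  assumes H: "hilbert_ring TYPE('a)"
  shows "x \<in> jacobson \<longleftrightarrow> (\<forall>M. maximal_ideal M \<longrightarrow> x \<in> M)"
proof
  assume x: "\<forall>M. maximal_ideal M \<longrightarrow> x \<in> M"
  have "x \<in> L" if L: "maximal_left_ideal L" for L
  proof -
    obtain \<M> where \<M>: "\<forall>M\<in>\<M>. maximal_ideal M" "core L = \<Inter>\<M>"
      using H core_prime[OF L] unfolding hilbert_ring_def by auto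
    have "x \<in> \<Inter>\<M>" using x \<M>(1) by simp
    then have "x \<in> core L" by (simp add: \<M>(2))
    then show ?thesis using core_subset by auto
  qed
  then show "x \<in> jacobson" unfolding jacobson_def by simp
next
  assume "x \<in> jacobson"
  then show "\<forall>M. maximal_ideal M \<longrightarrow> x \<in> M" using jacobson_subset_maximal_ideal by auto
qed

lemma full_iff: "full (u::'a::ring_1) \<longleftrightarrow> (\<forall>M. maximal_ideal M \<longrightarrow> u \<notin> M)"
proof
  assume u: "full u"
  show "\<forall>M. maximal_ideal M \<longrightarrow> u \<notin> M"
  proof (intro allI impI notI)
    fix M assume M: "maximal_ideal M" "u \<in> M"
    then have "ideal_gen {u} \<subseteq> M" using ideal_gen_subset_iff[OF maximal_ideal_two_sided[OF M(1)]] by simp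
    then have "M = UNIV" using u unfolding full_def by blast
    then show False using M(1) unfolding maximal_ideal_def by simp
  qed
next
  assume H: "\<forall>M. maximal_ideal M \<longrightarrow> u \<notin> M"
  show "full u"
  proof (rule ccontr)
    assume "\<not> full u"
    then have "1 \<notin> ideal_gen {u}" unfolding full_def using two_sided_ideal_one[OF two_sided_ideal_gen] by blast
    then obtain M where M: "maximal_ideal M" "ideal_gen {u} \<subseteq> M"
      using exists_maximal_ideal[OF two_sided_ideal_gen] by blast
    then have "u \<in> M" using ideal_gen_subset_iff[OF maximal_ideal_two_sided[OF M(1)]] by simp
    then show False using H M(1) by blast
  qed
qed

subsection \<open>The topology of Max(R)\<close>

lemma V_subset: "V I \<subseteq> MaxSpec"
  by (auto simp: V_def)

text \<open>V(I) \<union> V(K) = V(I \<inter> K): closed sets are closed under finite unions (primeness of maximal ideals).\<close>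
lemma V_Int:
  fixes I K :: "'a::ring_1 set"
  assumes I: "two_sided_ideal I" and K: "two_sided_ideal K"
  shows "V (I \<inter> K) = V I \<union> V K"
proof
  show "V (I \<inter> K) \<subseteq> V I \<union> V K"
  proof
    fix M assume "M \<in> V (I \<inter> K)"
    then have M: "maximal_ideal M" "I \<inter> K \<subseteq> M" by (auto simp: V_def MaxSpec_def)
    show "M \<in> V I \<union> V K"
    proof (rule ccontr)
      assume "M \<notin> V I \<union> V K"
      then obtain i k where ik: "i \<in> I" "i \<notin> M" "k \<in> K" "k \<notin> M" using M by (auto simp: V_def MaxSpec_def)
      have "i * r * k \<in> M" for r
        using M(2) two_sided_idealD(5)[OF I ik(1)] two_sided_idealD(4)[OF K ik(3)]
        by (metis IntI mult.assoc subsetD)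
      then show False using maximal_ideal_prime[OF M(1) ik(2)] ik(4) by blast
    qed
  qed
qed (auto simp: V_def)

lemma Union_complements_V:
  fixes \<K> :: "'a::ring_1 set set set"
  assumes H: "\<forall>S\<in>\<K>. \<exists>I. two_sided_ideal I \<and> S = MaxSpec - V I"
  defines "F \<equiv> {J. two_sided_ideal J \<and> MaxSpec - V J \<in> \<K>}"
  shows "\<Union>\<K> = MaxSpec - V (ideal_gen (\<Union>F))"
proof (rule set_eqI)
  fix M
  have "M \<in> \<Union>\<K> \<longleftrightarrow> (\<exists>J\<in>F. M \<in> MaxSpec - V J)"
  proof
    assume "M \<in> \<Union>\<K>"
    then obtain S where S: "S \<in> \<K>" "M \<in> S" by blast
    then obtain J where "two_sided_ideal J" "S = MaxSpec - V J" using H by blast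
    then show "\<exists>J\<in>F. M \<in> MaxSpec - V J" using S unfolding F_def by blast
  qed (auto simp: F_def)
  also have "\<dots> \<longleftrightarrow> M \<in> MaxSpec \<and> \<not> \<Union>F \<subseteq> M" by (auto simp: V_def)
  also have "\<dots> \<longleftrightarrow> M \<in> MaxSpec - V (ideal_gen (\<Union>F))"
  proof (cases "M \<in> MaxSpec")
    case True
    then have "two_sided_ideal M" using maximal_ideal_two_sided unfolding MaxSpec_def by simp
    then show ?thesis using True ideal_gen_subset_iff[of M "\<Union>F"] unfolding V_def by simp
  qed (simp add: V_def)
  finally show "M \<in> \<Union>\<K> \<longleftrightarrow> M \<in> MaxSpec - V (ideal_gen (\<Union>F))" .
qed

lemma istopology_max: "istopology (\<lambda>U. \<exists>I::'a::ring_1 set. two_sided_ideal I \<and> U = MaxSpec - V I)"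
  unfolding istopology_def
proof (intro conjI allI impI)
  fix S T :: "'a set set"
  assume "\<exists>I. two_sided_ideal I \<and> S = MaxSpec - V I" "\<exists>I. two_sided_ideal I \<and> T = MaxSpec - V I"
  then obtain I K where I: "two_sided_ideal I" "S = MaxSpec - V I" and K: "two_sided_ideal K" "T = MaxSpec - V K"
    by blast
  have "S \<inter> T = MaxSpec - V (I \<inter> K)" using I(2) K(2) V_Int[OF I(1) K(1)] by blast
  then show "\<exists>J. two_sided_ideal J \<and> S \<inter> T = MaxSpec - V J"
    using two_sided_ideal_Int[OF I(1) K(1)] by blast
next
  fix \<K> :: "'a set set set"
  assume "\<forall>S\<in>\<K>. \<exists>I. two_sided_ideal I \<and> S = MaxSpec - V I"
  then show "\<exists>J. two_sided_ideal J \<and> \<Union>\<K> = MaxSpec - V J"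
  proof (intro exI conjI)
    show "two_sided_ideal (ideal_gen (\<Union>{J. two_sided_ideal J \<and> MaxSpec - V J \<in> \<K>}))"
      by (rule two_sided_ideal_gen)
  qed (rule Union_complements_V)
qed

lemma openin_max:
  "openin (max_topology TYPE('a::ring_1)) U \<longleftrightarrow> (\<exists>I::'a set. two_sided_ideal I \<and> U = MaxSpec - V I)"
  unfolding max_topology_def topology_inverse'[OF istopology_max] by simp

lemma topspace_max: "topspace (max_topology TYPE('a::ring_1)) = (MaxSpec :: 'a set set)"
proof
  show "topspace (max_topology TYPE('a)) \<subseteq> MaxSpec"
  proof
    fix M assume "M \<in> topspace (max_topology TYPE('a))"
    then obtain U where "openin (max_topology TYPE('a)) U" "M \<in> U" unfolding topspace_def by blast
    then show "M \<in> MaxSpec" unfolding openin_max by blast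
  qed
next
  have "V (UNIV::'a set) = {}" by (auto simp: V_def MaxSpec_def maximal_ideal_def)
  then have "(MaxSpec :: 'a set set) = MaxSpec - V UNIV" by simp
  moreover have "two_sided_ideal (UNIV :: 'a set)" by (simp add: two_sided_ideal_def)
  ultimately have "openin (max_topology TYPE('a)) (MaxSpec :: 'a set set)"
    unfolding openin_max by blast
  then show "MaxSpec \<subseteq> topspace (max_topology TYPE('a))" by (rule openin_subset)
qed

lemma closedin_max:
  "closedin (max_topology TYPE('a::ring_1)) A \<longleftrightarrow> (\<exists>I::'a set. two_sided_ideal I \<and> A = V I)"
proof
  assume "closedin (max_topology TYPE('a)) A"
  then have A: "A \<subseteq> MaxSpec" "openin (max_topology TYPE('a)) (MaxSpec - A)"
    unfolding closedin_def topspace_max by auto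
  then obtain I :: "'a set" where "two_sided_ideal I" "MaxSpec - A = MaxSpec - V I"
    unfolding openin_max by blast
  moreover from this(2) have "A = V I" using A(1) V_subset by blast
  ultimately show "\<exists>I::'a set. two_sided_ideal I \<and> A = V I" by blast
next
  assume "\<exists>I::'a set. two_sided_ideal I \<and> A = V I"
  then obtain I :: "'a set" where "two_sided_ideal I" "A = V I" by blast
  then show "closedin (max_topology TYPE('a)) A"
    unfolding closedin_def topspace_max openin_max using V_subset by blast
qed

lemma comaximal_ideals:
  fixes I K :: "'a::ring_1 set"
  assumes I: "two_sided_ideal I" and K: "two_sided_ideal K" and disj: "V I \<inter> V K = {}"
  shows "\<exists>i\<in>I. \<exists>k\<in>K. i + k = 1"
proof (rule ccontr)
  let ?S = "{i + k |i k. i \<in> I \<and> k \<in> K}"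
  assume none: "\<not> ?thesis"
  have "1 \<notin> ?S"
  proof
    assume "1 \<in> ?S"
    then obtain i k where "1 = i + k" "i \<in> I" "k \<in> K" by blast
    then show False using none by metis
  qed
  then obtain M where M: "maximal_ideal M" "?S \<subseteq> M"
    using exists_maximal_ideal[OF two_sided_ideal_sum[OF I K]] by blast
  have "I \<subseteq> ?S"
  proof
    fix i assume "i \<in> I"
    moreover have "i = i + 0" by simp
    ultimately show "i \<in> ?S" using two_sided_idealD(1)[OF K] by blast
  qed
  moreover have "K \<subseteq> ?S"
  proof
    fix k assume "k \<in> K"
    moreover have "k = 0 + k" by simp
    ultimately show "k \<in> ?S" using two_sided_idealD(1)[OF I] by blast
  qed
  ultimately have "M \<in> V I \<inter> V K" using M unfolding V_def MaxSpec_def by blast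
  then show False using disj by blast
qed

subsection \<open>Max-splitting elements and clopen subsets of Max(R)\<close>

definition ZMax :: "'a::ring_1 \<Rightarrow> 'a set set" where
  "ZMax x = {M \<in> MaxSpec. x \<in> M}"

text \<open>ZMax x = V(RxR) is closed.\<close>
lemma closedin_ZMax: "closedin (max_topology TYPE('a::ring_1)) (ZMax (x::'a))"
proof -
  have "ZMax x = V (ideal_gen {x})"
    unfolding ZMax_def V_def MaxSpec_def using ideal_gen_subset_iff maximal_ideal_two_sided by fastforce
  then show ?thesis unfolding closedin_max using two_sided_ideal_gen by blast
qed

definition splits_max :: "'a::ring_1 \<Rightarrow> bool" where
  "splits_max e \<longleftrightarrow> (\<forall>M. maximal_ideal M \<longrightarrow> e \<in> M \<or> 1 - e \<in> M)"

lemma splits_max_complement: "splits_max e \<Longrightarrow> splits_max (1 - e)"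
  unfolding splits_max_def by auto

text \<open>For a splitting e, ZMax e is clopen, being the complement of the closed ZMax (1 - e).\<close>
lemma clopen_ZMax:
  fixes e :: "'a::ring_1"
  assumes "splits_max e"
  shows "closedin (max_topology TYPE('a)) (ZMax e) \<and> openin (max_topology TYPE('a)) (ZMax e)"
proof -
  have "ZMax e = topspace (max_topology TYPE('a)) - ZMax (1 - e)"
    using assms maximal_ideal_not_both unfolding topspace_max ZMax_def splits_max_def MaxSpec_def by blast
  then show ?thesis using closedin_ZMax by (metis openin_diff openin_topspace)
qed

lemma clopen_imp_ZMax:
  fixes C :: "'a::ring_1 set set"
  assumes "closedin (max_topology TYPE('a)) C" "openin (max_topology TYPE('a)) C"
  shows "\<exists>e. splits_max e \<and> C = ZMax (1 - e)"
proof -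
  obtain I K :: "'a set" where I: "two_sided_ideal I" "C = V I" and K: "two_sided_ideal K" "C = MaxSpec - V K"
    using assms unfolding closedin_max openin_max by blast
  then obtain i k where ik: "i \<in> I" "k \<in> K" "i + k = 1"
    using comaximal_ideals by blast
  then have "1 - k = i" by (simp add: algebra_simps)
  have in_C: "M \<in> C \<Longrightarrow> 1 - k \<in> M" and notin_C: "maximal_ideal M \<Longrightarrow> M \<notin> C \<Longrightarrow> k \<in> M" for M
    using I(2) K(2) ik(1,2) \<open>1 - k = i\<close> unfolding V_def MaxSpec_def by auto
  have "splits_max k" using in_C notin_C unfolding splits_max_def by blast
  moreover have "C = ZMax (1 - k)"
    using in_C notin_C maximal_ideal_not_both I(2) V_subset unfolding ZMax_def MaxSpec_def by blast
  ultimately show ?thesis by blast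
qed

definition max_clean :: "'a::ring_1 \<Rightarrow> bool" where
  "max_clean a \<longleftrightarrow> (\<exists>e. splits_max e \<and> full (a - e))"

text \<open>If every element is max-clean, disjoint closed sets are separated by ZMax(1 - e) and ZMax(e).\<close>
lemma strongly_zero_dimensional_if_max_clean:
  assumes clean: "\<forall>a::'a::ring_1. max_clean a"
  shows "strongly_zero_dimensional (max_topology TYPE('a))"
  unfolding strongly_zero_dimensional_def
proof (intro allI impI)
  fix A B :: "'a set set"
  assume H: "closedin (max_topology TYPE('a)) A \<and> closedin (max_topology TYPE('a)) B \<and> A \<inter> B = {}"
  then obtain I K :: "'a set" where I: "two_sided_ideal I" "A = V I" and K: "two_sided_ideal K" "B = V K"
    unfolding closedin_max by blast
  then have "V I \<inter> V K = {}" using H by simp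
  then obtain i k where ik: "i \<in> I" "k \<in> K" "i + k = 1"
    using comaximal_ideals[OF I(1) K(1)] by blast
  obtain e where e: "splits_max e" and "full (i - e)"
    using clean unfolding max_clean_def by blast
  then have u: "\<And>M. maximal_ideal M \<Longrightarrow> i - e \<notin> M" unfolding full_iff by blast
  have "A \<subseteq> ZMax (1 - e)"
  proof
    fix M assume "M \<in> A"
    then have M: "maximal_ideal M" "i \<in> M" using I(2) ik(1) unfolding V_def MaxSpec_def by auto
    then have "e \<notin> M" using u two_sided_idealD(3)[OF maximal_ideal_two_sided] by blast
    then show "M \<in> ZMax (1 - e)" using e M unfolding splits_max_def ZMax_def MaxSpec_def by blast
  qed
  moreover have "B \<subseteq> ZMax e"
  proof
    fix M assume "M \<in> B"
    then have M: "maximal_ideal M" "k \<in> M" using K(2) ik(2) unfolding V_def MaxSpec_def by auto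
    have "i - e = (1 - e) - k" using ik(3) by (simp add: algebra_simps)
    then have "1 - e \<notin> M" using u[OF M(1)] M two_sided_idealD(3)[OF maximal_ideal_two_sided] by metis
    then show "M \<in> ZMax e" using e M unfolding splits_max_def ZMax_def MaxSpec_def by blast
  qed
  moreover have "ZMax (1 - e) \<inter> ZMax e = {}"
    using maximal_ideal_not_both unfolding ZMax_def MaxSpec_def by blast
  ultimately show "\<exists>C1 C2. closedin (max_topology TYPE('a)) C1 \<and> openin (max_topology TYPE('a)) C1 \<and>
      closedin (max_topology TYPE('a)) C2 \<and> openin (max_topology TYPE('a)) C2 \<and>
      C1 \<inter> C2 = {} \<and> A \<subseteq> C1 \<and> B \<subseteq> C2"
    using clopen_ZMax[OF splits_max_complement[OF e]] clopen_ZMax[OF e] by auto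
qed

text \<open>Conversely, separating ZMax(a) from ZMax(1 - a) by a clopen ZMax(1 - e) makes a - e full.\<close>
lemma max_clean_if_strongly_zero_dimensional:
  assumes szd: "strongly_zero_dimensional (max_topology TYPE('a::ring_1))"
  shows "max_clean (a::'a)"
proof -
  have "ZMax a \<inter> ZMax (1 - a) = {}"
    using maximal_ideal_not_both unfolding ZMax_def MaxSpec_def by blast
  then obtain C1 C2 where C: "closedin (max_topology TYPE('a)) C1" "openin (max_topology TYPE('a)) C1"
      "C1 \<inter> C2 = {}" "ZMax a \<subseteq> C1" "ZMax (1 - a) \<subseteq> C2"
    using szd[unfolded strongly_zero_dimensional_def, rule_format, of "ZMax a" "ZMax (1 - a)"]
      closedin_ZMax[of a] closedin_ZMax[of "1 - a"] by blast
  obtain e where e: "splits_max e" and C1: "C1 = ZMax (1 - e)"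
    using clopen_imp_ZMax[OF C(1,2)] by blast
  have "a - e \<notin> M" if M: "maximal_ideal M" for M
  proof
    assume ae: "a - e \<in> M"
    have tM: "two_sided_ideal M" using M by (rule maximal_ideal_two_sided)
    consider "1 - e \<in> M" | "e \<in> M" using e M unfolding splits_max_def by blast
    then show False
    proof cases
      case 1
      then have "(1 - e) - (a - e) \<in> M" using ae two_sided_idealD(3)[OF tM] by blast
      then have "M \<in> C1 \<inter> C2" using C(5) 1 M unfolding C1 ZMax_def MaxSpec_def by auto
      then show False using C(3) by blast
    next
      case 2
      then have "(a - e) + e \<in> M" using ae two_sided_idealD(2)[OF tM] by blast
      then have "1 - e \<in> M" using C(4) M unfolding C1 ZMax_def MaxSpec_def by auto
      then show False using 2 M maximal_ideal_not_both by blast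
    qed
  qed
  then have "full (a - e)" unfolding full_iff by blast
  then show ?thesis using e unfolding max_clean_def by blast
qed

subsection \<open>Feckly clean Hilbert rings\<close>

lemma hilbert_peirce_in_jacobson_iff:
  fixes e :: "'a::ring_1"
  assumes H: "hilbert_ring TYPE('a)"
  shows "(\<forall>r. e * r * (1 - e) \<in> jacobson) \<longleftrightarrow> splits_max e"
proof
  assume peirce: "\<forall>r. e * r * (1 - e) \<in> jacobson"
  show "splits_max e"
    unfolding splits_max_def
  proof (intro allI impI)
    fix M :: "'a set" assume M: "maximal_ideal M"
    then have "\<forall>r. e * r * (1 - e) \<in> M" using peirce jacobson_subset_maximal_ideal by blast
    then show "e \<in> M \<or> 1 - e \<in> M" using maximal_ideal_prime[OF M] by blast
  qed
next
  assume e: "splits_max e"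
  have "e * r * (1 - e) \<in> M" if "maximal_ideal M" for M r
    using e that two_sided_idealD(4,5)[OF maximal_ideal_two_sided] unfolding splits_max_def by blast
  then show "\<forall>r. e * r * (1 - e) \<in> jacobson" using hilbert_jacobson_iff[OF H] by blast
qed

lemma hilbert_feckly_clean_elem_iff:
  fixes a :: "'a::ring_1"
  assumes H: "hilbert_ring TYPE('a)"
  shows "feckly_clean_elem a \<longleftrightarrow> max_clean a"
proof -
  have "(a = e + u) \<longleftrightarrow> (u = a - e)" for e u :: 'a by (auto simp: algebra_simps)
  then show ?thesis
    unfolding feckly_clean_elem_def max_clean_def hilbert_peirce_in_jacobson_iff[OF H] by auto
qed

theorem corollary3p4:
  assumes "hilbert_ring TYPE('a::ring_1)"
  shows "feckly_clean TYPE('a) \<longleftrightarrow> strongly_zero_dimensional (max_topology TYPE('a))"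
proof -
  have "feckly_clean TYPE('a) \<longleftrightarrow> (\<forall>a::'a. max_clean a)"
    using hilbert_feckly_clean_elem_iff[OF assms] unfolding feckly_clean_def by blast
  also have "\<dots> \<longleftrightarrow> strongly_zero_dimensional (max_topology TYPE('a))"
    using strongly_zero_dimensional_if_max_clean max_clean_if_strongly_zero_dimensional by blast
  finally show ?thesis .
qed

end
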